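(* Let $S$ be a commutative ring and $I\subseteq S$ an additive subgroup. Then: (1) the blowup $\mathrm{Bl}(I)=\mathrm{Bl}_S(I):=\bigcup_{k\ge 0}(I^k:I^k)_S$ is a subring of $S$; (2) if $R\subseteq S$ is a subring and $RI$ is an invertible ideal of $R$ within $S$, then $\mathrm{Bl}(I)\subseteq R$; (3) if for some $n\ge0$ the set $RI$ is an invertible ideal of $R=(I^n:I^n)_S$ within $S$, then $R=\mathrm{Bl}(I)$; (4) if $S$ is a number field and $I$ is finitely generated and non-zero, then there exists $n\ge 0$ such that $\mathrm{Bl}(I)=(I^n:I^n)_S$, and $\mathrm{Bl}(I)$ is an order.
   Context: For additive subgroups $I,J$ of a commutative ring $S$: $IJ$ is the set of finite sums $\sum x_iy_i$ with $x_i\in I$, $y_i\in J$; $(I:J)_S=\{x\in S: xJ\subseteq I\}$; $I^0=(I:I)_S$ and $I^{n+1}=I^n\cdot I$ for $n\ge0$. For a subring $R\subseteq S$, an invertible ideal of $R$ within $S$ is an $R$-submodule $I\subseteq S$ for which there is an $R$-submodule $J\subseteq S$ with $IJ=R$. A number field is a finite-dimensional field extension of $\mathbb{Q}$; an order is a domain whose additive group is isomorphic to $\mathbb{Z}^n$ for some $n\ge 0$. *)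

theory Defs
  imports Main
begin

text \<open>Ambient commutative ring S is the type 'a. Subsets of 'a play the role of
additive subgroups / subrings / submodules of S.\<close>

definition additive_subgroup :: "'a::comm_ring_1 set \<Rightarrow> bool" where
  "additive_subgroup I \<longleftrightarrow> 0 \<in> I \<and> (\<forall>x\<in>I. \<forall>y\<in>I. x + y \<in> I) \<and> (\<forall>x\<in>I. - x \<in> I)"

definition subring :: "'a::comm_ring_1 set \<Rightarrow> bool" where
  "subring R \<longleftrightarrow> additive_subgroup R \<and> 1 \<in> R \<and> (\<forall>x\<in>R. \<forall>y\<in>R. x * y \<in> R)"

definition set_mult :: "'a::comm_ring_1 set \<Rightarrow> 'a set \<Rightarrow> 'a set" where
  "set_mult I J = {\<Sum>i<n. x i * y i | (n::nat) x y. \<forall>i<n. x i \<in> I \<and> y i \<in> J}"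

definition colon :: "'a::comm_ring_1 set \<Rightarrow> 'a set \<Rightarrow> 'a set" where
  "colon I J = {x. \<forall>y\<in>J. x * y \<in> I}"

fun set_pow :: "'a::comm_ring_1 set \<Rightarrow> nat \<Rightarrow> 'a set" where
  "set_pow I 0 = colon I I"
| "set_pow I (Suc n) = set_mult (set_pow I n) I"

definition blowup :: "'a::comm_ring_1 set \<Rightarrow> 'a set" where
  "blowup I = (\<Union>k. colon (set_pow I k) (set_pow I k))"

definition submodule :: "'a::comm_ring_1 set \<Rightarrow> 'a set \<Rightarrow> bool" where
  "submodule R M \<longleftrightarrow> additive_subgroup M \<and> (\<forall>r\<in>R. \<forall>m\<in>M. r * m \<in> M)"

definition invertible_ideal :: "'a::comm_ring_1 set \<Rightarrow> 'a set \<Rightarrow> bool" where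
  "invertible_ideal R M \<longleftrightarrow> submodule R M \<and> (\<exists>J. submodule R J \<and> set_mult M J = R)"

text \<open>The ambient ring (the whole type) is a number field: a field of characteristic 0
that is finite-dimensional over Q. Since 'a is only a comm_ring_1, Q-linear combinations
are written with cleared denominators: every x has a nonzero integer multiple that is a
Z-linear combination of a fixed finite set B.\<close>
definition number_field_type :: "'a::comm_ring_1 itself \<Rightarrow> bool" where
  "number_field_type (_ :: 'a itself) \<longleftrightarrow>
     (0::'a) \<noteq> 1 \<and> (\<forall>x::'a. x \<noteq> 0 \<longrightarrow> (\<exists>y. x * y = 1)) \<and>
     (\<forall>n::nat. (of_nat n :: 'a) = 0 \<longrightarrow> n = 0) \<and>
     (\<exists>B::'a set. finite B \<and> (\<forall>x::'a. \<exists>(d::int) (c::'a \<Rightarrow> int).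
         d \<noteq> 0 \<and> of_int d * x = (\<Sum>b\<in>B. of_int (c b) * b)))"

definition fin_gen :: "'a::comm_ring_1 set \<Rightarrow> bool" where
  "fin_gen I \<longleftrightarrow> (\<exists>G. finite G \<and> I = {\<Sum>g\<in>G. of_int (c g) * g | c :: 'a \<Rightarrow> int. True})"

definition is_order :: "'a::comm_ring_1 set \<Rightarrow> bool" where
  "is_order O' \<longleftrightarrow> subring O' \<and> (0::'a) \<noteq> 1 \<and>
     (\<forall>x\<in>O'. \<forall>y\<in>O'. x * y = 0 \<longrightarrow> x = 0 \<or> y = 0) \<and>
     (\<exists>(n::nat) (b::nat \<Rightarrow> 'a).
        bij_betw (\<lambda>c. \<Sum>i<n. of_int (c i) * b i) {c :: nat \<Rightarrow> int. \<forall>i\<ge>n. c i = 0} O')"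

end

theory Submission
  imports Defs HOL.Rat HOL.Vector_Spaces
begin

text \<open>
  The rings $O_k = (I^k : I^k)$ increase with $k$, so their union is a ring. If $RI$ is
  invertible then so is $R I^{k+1}$, and $x R I^{k+1} \subseteq R I^{k+1}$ for
  $x \in O_k \subseteq O_{k+1}$ forces $x \in R$; this gives (2) and (3).

  For (4), an element of $O_{k+1}$ stabilizes the full-rank lattice $I^{k+1} L$, where $L$ is
  the $\mathbb{Z}$-span of a $\mathbb{Q}$-basis, so its trace is an integer. A subring of a
  number field all of whose traces are integers lies in the $\mathbb{Z}$-span of a dual basis
  for the trace form. Hence $\mathrm{Bl}(I)$ is a finitely generated, hence free, abelian group,
  and its finitely many generators already lie in a single $O_n$.
\<close>

section \<open>Products of additive subgroups\<close>

lemma zero_mem_set_mult: "0 \<in> set_mult A B"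
  unfolding set_mult_def by (rule CollectI, rule exI[of _ 0]) auto

lemma set_mult_add_mult:
  assumes "s \<in> set_mult A B" "a \<in> A" "b \<in> B"
  shows "s + a * b \<in> set_mult A B"
proof -
  obtain n :: nat and x y where s: "s = (\<Sum>i<n. x i * y i)" and xy: "\<forall>i<n. x i \<in> A \<and> y i \<in> B"
    using assms(1) unfolding set_mult_def by blast
  have "s + a * b = (\<Sum>i<Suc n. (x(n := a)) i * (y(n := b)) i)"
    using s by simp
  moreover have "\<forall>i<Suc n. (x(n := a)) i \<in> A \<and> (y(n := b)) i \<in> B"
    using xy assms(2,3) by (auto simp: less_Suc_eq)
  ultimately show ?thesis unfolding set_mult_def by blast
qed

lemma set_mult_induct [consumes 1, case_names zero add_mult]:
  assumes "u \<in> set_mult A B"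
    and "P 0"
    and "\<And>s a b. s \<in> set_mult A B \<Longrightarrow> P s \<Longrightarrow> a \<in> A \<Longrightarrow> b \<in> B \<Longrightarrow> P (s + a * b)"
  shows "P u"
proof -
  obtain n :: nat and x y where u: "u = (\<Sum>i<n. x i * y i)" and xy: "\<forall>i<n. x i \<in> A \<and> y i \<in> B"
    using assms(1) unfolding set_mult_def by blast
  have "m \<le> n \<Longrightarrow> (\<Sum>i<m. x i * y i) \<in> set_mult A B \<and> P (\<Sum>i<m. x i * y i)" for m
  proof (induction m)
    case 0
    then show ?case using assms(2) zero_mem_set_mult by simp
  next
    case (Suc m)
    then have "m < n" and IH: "(\<Sum>i<m. x i * y i) \<in> set_mult A B \<and> P (\<Sum>i<m. x i * y i)"
      by simp_all
    then show ?case using xy assms(3)[of _ "x m" "y m"] set_mult_add_mult[of _ A B "x m" "y m"] by simp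
  qed
  then show ?thesis using u by blast
qed

lemma mult_mem_set_mult: "a \<in> A \<Longrightarrow> b \<in> B \<Longrightarrow> a * b \<in> set_mult A B"
  using set_mult_add_mult[OF zero_mem_set_mult] by fastforce

lemma add_mem_set_mult:
  assumes "u \<in> set_mult A B" "v \<in> set_mult A B"
  shows "u + v \<in> set_mult A B"
  using assms(2) by (induction rule: set_mult_induct)
    (simp_all add: assms(1) set_mult_add_mult flip: add.assoc)

lemma set_mult_least:
  assumes "0 \<in> C" "\<And>x y. x \<in> C \<Longrightarrow> y \<in> C \<Longrightarrow> x + y \<in> C"
    and "\<And>a b. a \<in> A \<Longrightarrow> b \<in> B \<Longrightarrow> a * b \<in> C"
  shows "set_mult A B \<subseteq> C"
proof
  fix u assume "u \<in> set_mult A B"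
  then show "u \<in> C" by (induction rule: set_mult_induct) (simp_all add: assms)
qed

lemma mult_left_mem_set_mult:
  assumes "\<And>a. a \<in> A \<Longrightarrow> x * a \<in> A" "u \<in> set_mult A B"
  shows "x * u \<in> set_mult A B"
  using assms(2) by (induction rule: set_mult_induct)
    (simp_all add: zero_mem_set_mult set_mult_add_mult assms(1) distrib_left flip: mult.assoc)

lemma additive_subgroup_set_mult:
  assumes "additive_subgroup A"
  shows "additive_subgroup (set_mult A B)"
proof -
  have "- u \<in> set_mult A B" if "u \<in> set_mult A B" for u
    using that
  proof (induction rule: set_mult_induct)
    case (add_mult s a b)
    then have "- s + (- a) * b \<in> set_mult A B"
      using assms set_mult_add_mult unfolding additive_subgroup_def by blast
    then show ?case by simp
  qed (simp add: zero_mem_set_mult)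
  then show ?thesis
    unfolding additive_subgroup_def using zero_mem_set_mult add_mem_set_mult by blast
qed

lemma set_mult_mono: "A \<subseteq> A' \<Longrightarrow> B \<subseteq> B' \<Longrightarrow> set_mult A B \<subseteq> set_mult A' B'"
  by (intro set_mult_least zero_mem_set_mult add_mem_set_mult mult_mem_set_mult) auto

lemma set_mult_commute: "set_mult A B = set_mult B A"
  by (intro equalityI set_mult_least zero_mem_set_mult add_mem_set_mult)
    (metis mult.commute mult_mem_set_mult)+

lemma set_mult_assoc: "set_mult (set_mult A B) C = set_mult A (set_mult B C)"
proof (intro equalityI set_mult_least zero_mem_set_mult add_mem_set_mult)
  fix u c assume "u \<in> set_mult A B" "c \<in> C"
  then show "u * c \<in> set_mult A (set_mult B C)"
    by (induction rule: set_mult_induct)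
      (simp_all add: zero_mem_set_mult add_mem_set_mult mult_mem_set_mult distrib_right mult.assoc)
next
  fix a u assume "a \<in> A" "u \<in> set_mult B C"
  from this(2) show "a * u \<in> set_mult (set_mult A B) C"
    by (induction rule: set_mult_induct)
      (simp_all add: \<open>a \<in> A\<close> zero_mem_set_mult add_mem_set_mult mult_mem_set_mult distrib_left
        flip: mult.assoc)
qed

lemma set_mult_left_commute: "set_mult A (set_mult B C) = set_mult B (set_mult A C)"
  by (metis set_mult_assoc set_mult_commute)

lemmas set_mult_ac = set_mult_assoc set_mult_commute set_mult_left_commute

lemma set_mult_subring_self:
  assumes "subring R"
  shows "set_mult R R = R"
proof
  show "set_mult R R \<subseteq> R"
    using assms by (intro set_mult_least) (auto simp: subring_def additive_subgroup_def)
  show "R \<subseteq> set_mult R R"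
    using assms mult_mem_set_mult[of _ R 1 R] by (auto simp: subring_def)
qed

section \<open>The rings $(I^k : I^k)$ and the blowup\<close>

lemma set_mult_colon_self:
  assumes "additive_subgroup I"
  shows "set_mult (colon I I) I = I"
proof
  show "set_mult (colon I I) I \<subseteq> I"
    using assms by (intro set_mult_least) (auto simp: colon_def additive_subgroup_def)
  show "I \<subseteq> set_mult (colon I I) I"
    using mult_mem_set_mult[of 1 "colon I I" _ I] by (auto simp: colon_def)
qed

lemma subring_colon_self:
  assumes "additive_subgroup J"
  shows "subring (colon J J)"
  using assms unfolding subring_def additive_subgroup_def colon_def
  by (auto simp: distrib_right mult.assoc)

lemma additive_subgroup_set_pow: "additive_subgroup I \<Longrightarrow> additive_subgroup (set_pow I k)"
  by (induction k) (simp_all add: additive_subgroup_set_mult subring_colon_self[unfolded subring_def])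

lemma set_pow_1: "additive_subgroup I \<Longrightarrow> set_pow I (Suc 0) = I"
  by (simp add: set_mult_colon_self)

abbreviation colon_pow :: "'a::comm_ring_1 set \<Rightarrow> nat \<Rightarrow> 'a set" where
  "colon_pow I k \<equiv> colon (set_pow I k) (set_pow I k)"

lemma subring_colon_pow: "additive_subgroup I \<Longrightarrow> subring (colon_pow I k)"
  by (intro subring_colon_self additive_subgroup_set_pow)

lemma colon_pow_subset_Suc: "colon_pow I k \<subseteq> colon_pow I (Suc k)"
  unfolding colon_def by (auto intro: mult_left_mem_set_mult)

lemma colon_pow_mono: "k \<le> k' \<Longrightarrow> colon_pow I k \<subseteq> colon_pow I k'"
  using lift_Suc_mono_le[of "colon_pow I", OF colon_pow_subset_Suc] .

lemma colon_pow_subset_blowup: "colon_pow I k \<subseteq> blowup I"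
  unfolding blowup_def by blast

lemma subring_blowup:
  assumes "additive_subgroup I"
  shows "subring (blowup I)"
proof -
  have common: "\<exists>k. x \<in> colon_pow I k \<and> y \<in> colon_pow I k"
    if xy: "x \<in> blowup I" "y \<in> blowup I" for x y
  proof -
    obtain k l where "x \<in> colon_pow I k" "y \<in> colon_pow I l"
      using xy unfolding blowup_def by blast
    then show ?thesis
      using colon_pow_mono[of k "max k l" I] colon_pow_mono[of l "max k l" I] by auto
  qed
  have sub: "subring (colon_pow I k)" for k
    using assms by (rule subring_colon_pow)
  show ?thesis
    unfolding subring_def additive_subgroup_def
  proof (intro conjI ballI)
    show "0 \<in> blowup I" "1 \<in> blowup I"
      using sub[of 0] colon_pow_subset_blowup[of I 0] by (auto simp: subring_def additive_subgroup_def)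
    fix x assume x: "x \<in> blowup I"
    then obtain k where "x \<in> colon_pow I k" unfolding blowup_def by blast
    then show "- x \<in> blowup I"
      using sub[of k] colon_pow_subset_blowup[of I k] by (auto simp: subring_def additive_subgroup_def)
    fix y assume "y \<in> blowup I"
    then obtain k where "x \<in> colon_pow I k" "y \<in> colon_pow I k" using common x by blast
    then show "x + y \<in> blowup I" "x * y \<in> blowup I"
      using sub[of k] colon_pow_subset_blowup[of I k] by (auto simp: subring_def additive_subgroup_def)
  qed
qed

lemma power_mem_set_pow:
  assumes "additive_subgroup I" "a \<in> I"
  shows "a ^ Suc k \<in> set_pow I (Suc k)"
proof (induction k)
  case 0
  then show ?case using assms set_pow_1[OF assms(1)] by simp
next
  case (Suc k)
  then show ?case using mult_mem_set_mult[OF Suc assms(2)] by (simp add: mult.commute)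
qed

lemma mem_if_stabilizes_invertible:
  assumes "set_mult M J = R" "1 \<in> R" "\<And>m. m \<in> M \<Longrightarrow> x * m \<in> M"
  shows "x \<in> R"
  using mult_left_mem_set_mult[of M x "1" J] assms by simp

lemma invertible_set_mult_set_pow:
  assumes I: "additive_subgroup I" and R: "subring R" and J: "set_mult (set_mult R I) J = R"
  shows "\<exists>J'. set_mult (set_mult R (set_pow I (Suc k))) J' = R"
proof (induction k)
  case 0
  then show ?case using J set_pow_1[OF I] by auto
next
  case (Suc k)
  then obtain J' where J': "set_mult (set_mult R (set_pow I (Suc k))) J' = R" by blast
  have RR: "set_mult R (set_mult R X) = set_mult R X" for X
    by (metis set_mult_assoc set_mult_subring_self[OF R])
  have "set_mult (set_mult R (set_pow I (Suc (Suc k)))) (set_mult J' J)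
      = set_mult (set_mult (set_mult R (set_pow I (Suc k))) J') (set_mult (set_mult R I) J)"
    by (simp add: set_mult_ac RR)
  also have "\<dots> = R" using J J' set_mult_subring_self[OF R] by simp
  finally show ?case by blast
qed

lemma blowup_subset_if_invertible:
  assumes I: "additive_subgroup I" and R: "subring R"
    and inv: "invertible_ideal R (set_mult R I)"
  shows "blowup I \<subseteq> R"
proof
  fix x assume "x \<in> blowup I"
  then obtain k where "x \<in> colon_pow I (Suc k)"
    unfolding blowup_def using colon_pow_subset_Suc by blast
  then have "x * m \<in> set_mult R (set_pow I (Suc k))" if "m \<in> set_mult R (set_pow I (Suc k))" for m
    using mult_left_mem_set_mult[OF _ that[unfolded set_mult_commute[of R]]]
    by (simp add: colon_def set_mult_commute)
  moreover obtain J where "set_mult (set_mult R (set_pow I (Suc k))) J = R"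
    using inv invertible_set_mult_set_pow[OF I R] unfolding invertible_ideal_def by blast
  ultimately show "x \<in> R"
    using R mem_if_stabilizes_invertible unfolding subring_def by blast
qed

lemma colon_pow_eq_blowup_if_invertible:
  assumes "additive_subgroup I"
    and "invertible_ideal (colon_pow I n) (set_mult (colon_pow I n) I)"
  shows "colon_pow I n = blowup I"
  using blowup_subset_if_invertible[OF assms(1) subring_colon_pow[OF assms(1)] assms(2)]
    colon_pow_subset_blowup by blast

section \<open>Additive subgroups generated by finitely many elements\<close>

lemma of_int_mult_mem:
  assumes H: "additive_subgroup H" and h: "h \<in> H"
  shows "of_int k * h \<in> H"
proof -
  have nat: "of_nat m * h \<in> H" for m
    by (induction m) (use H h in \<open>auto simp: additive_subgroup_def distrib_right\<close>)
  show ?thesis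
  proof (cases "k \<ge> 0")
    case True
    then show ?thesis using nat[of "nat k"] by simp
  next
    case False
    then have "of_int k * h = - (of_nat (nat (- k)) * h)" by simp
    then show ?thesis using nat[of "nat (- k)"] H unfolding additive_subgroup_def by simp
  qed
qed

lemma sum_mem:
  assumes "additive_subgroup H" "\<And>i. i \<in> S \<Longrightarrow> f i \<in> H"
  shows "sum f S \<in> H"
  using assms(2)
  by (induction S rule: infinite_finite_induct) (use assms(1) in \<open>auto simp: additive_subgroup_def\<close>)

lemma diff_mem:
  "additive_subgroup H \<Longrightarrow> x \<in> H \<Longrightarrow> y \<in> H \<Longrightarrow> x - y \<in> H"
  unfolding additive_subgroup_def by (metis diff_conv_add_uminus)

definition int_span :: "nat \<Rightarrow> (nat \<Rightarrow> 'a::comm_ring_1) \<Rightarrow> 'a set" where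
  "int_span n b = {\<Sum>i<n. of_int (c i) * b i | c. True}"

definition int_independent :: "nat \<Rightarrow> (nat \<Rightarrow> 'a::comm_ring_1) \<Rightarrow> bool" where
  "int_independent n b \<longleftrightarrow> (\<forall>c. (\<Sum>i<n. of_int (c i) * b i) = 0 \<longrightarrow> (\<forall>i<n. c i = 0))"

lemma int_independentD:
  "int_independent n b \<Longrightarrow> (\<Sum>i<n. of_int (c i) * b i) = 0 \<Longrightarrow> i < n \<Longrightarrow> c i = 0"
  unfolding int_independent_def by blast

lemma int_spanI: "x = (\<Sum>i<n. of_int (c i) * b i) \<Longrightarrow> x \<in> int_span n b"
  unfolding int_span_def by blast

lemma int_spanE:
  assumes "x \<in> int_span n b"
  obtains c where "x = (\<Sum>i<n. of_int (c i) * b i)"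
  using assms unfolding int_span_def by blast

lemma int_span_0: "int_span 0 b = {0}"
  by (simp add: int_span_def)

lemma int_span_Suc: "x \<in> int_span (Suc n) b \<longleftrightarrow> (\<exists>s k. s \<in> int_span n b \<and> x = s + of_int k * b n)"
proof
  assume "x \<in> int_span (Suc n) b"
  then obtain c where "x = (\<Sum>i<n. of_int (c i) * b i) + of_int (c n) * b n"
    by (auto elim: int_spanE)
  moreover have "(\<Sum>i<n. of_int (c i) * b i) \<in> int_span n b" by (rule int_spanI) (rule refl)
  ultimately show "\<exists>s k. s \<in> int_span n b \<and> x = s + of_int k * b n" by blast
next
  assume "\<exists>s k. s \<in> int_span n b \<and> x = s + of_int k * b n"
  then obtain c k where "x = (\<Sum>i<n. of_int (c i) * b i) + of_int k * b n"
    by (auto elim: int_spanE)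
  then have "x = (\<Sum>i<Suc n. of_int ((c(n := k)) i) * b i)" by simp
  then show "x \<in> int_span (Suc n) b" by (rule int_spanI)
qed

lemma int_span_cong:
  assumes "\<And>i. i < n \<Longrightarrow> b i = b' i"
  shows "int_span n b = int_span n b'"
proof -
  have "(\<Sum>i<n. of_int (c i) * b i) = (\<Sum>i<n. of_int (c i) * b' i)" for c
    using assms by (intro sum.cong) auto
  then show ?thesis unfolding int_span_def by simp
qed

lemma additive_subgroup_int_span: "additive_subgroup (int_span n b)"
  unfolding additive_subgroup_def
proof (intro conjI ballI)
  show "0 \<in> int_span n b" by (rule int_spanI[where c = "\<lambda>_. 0"]) simp
  fix x assume "x \<in> int_span n b"
  then obtain c where x: "x = (\<Sum>i<n. of_int (c i) * b i)" by (rule int_spanE)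
  have "- x = (\<Sum>i<n. of_int (- c i) * b i)" unfolding x by (simp add: sum_negf)
  then show "- x \<in> int_span n b" by (rule int_spanI)
  fix y assume "y \<in> int_span n b"
  then obtain d where y: "y = (\<Sum>i<n. of_int (d i) * b i)" by (rule int_spanE)
  have "x + y = (\<Sum>i<n. of_int (c i + d i) * b i)"
    unfolding x y by (simp add: sum.distrib distrib_right)
  then show "x + y \<in> int_span n b" by (rule int_spanI)
qed

lemma int_span_generator: "i < n \<Longrightarrow> b i \<in> int_span n b"
proof (rule int_spanI[where c = "\<lambda>j. if j = i then 1 else 0"])
  assume "i < n"
  have "(\<Sum>j<n. of_int (if j = i then 1 else 0) * b j) = (\<Sum>j<n. if j = i then b j else 0)"
    by (rule sum.cong) auto
  also have "\<dots> = b i" using \<open>i < n\<close> by simp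
  finally show "b i = (\<Sum>j<n. of_int (if j = i then 1 else 0) * b j)" ..
qed

lemma int_span_least:
  assumes H: "additive_subgroup H" and b: "\<And>i. i < n \<Longrightarrow> b i \<in> H"
  shows "int_span n b \<subseteq> H"
  by (auto elim!: int_spanE intro!: sum_mem[OF H] of_int_mult_mem[OF H] b)

lemma set_mult_int_span:
  "set_mult (int_span m g) (int_span m' g')
     \<subseteq> int_span (m * m') (\<lambda>k. g (k div m') * g' (k mod m'))" (is "_ \<subseteq> int_span _ ?g")
proof (rule set_mult_least)
  show "0 \<in> int_span (m * m') ?g" "\<And>x y. x \<in> int_span (m * m') ?g \<Longrightarrow> y \<in> int_span (m * m') ?g
      \<Longrightarrow> x + y \<in> int_span (m * m') ?g"
    using additive_subgroup_int_span unfolding additive_subgroup_def by blast+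
next
  have gen: "g i * g' j \<in> int_span (m * m') ?g" if "i < m" "j < m'" for i j
  proof -
    have "i * m' + j < (i + 1) * m'" using that(2) by simp
    also have "\<dots> \<le> m * m'" using that(1) by (intro mult_right_mono) auto
    finally have "i * m' + j < m * m'" .
    then show ?thesis using int_span_generator[of "i * m' + j" "m * m'" ?g] that by simp
  qed
  fix x y assume "x \<in> int_span m g" "y \<in> int_span m' g'"
  then obtain c d where x: "x = (\<Sum>i<m. of_int (c i) * g i)" and y: "y = (\<Sum>j<m'. of_int (d j) * g' j)"
    by (auto elim!: int_spanE)
  have "x * y = (\<Sum>i<m. \<Sum>j<m'. of_int (c i * d j) * (g i * g' j))"
    unfolding x y sum_product by (intro sum.cong refl) (simp add: ac_simps)
  also have "\<dots> \<in> int_span (m * m') ?g"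
    by (intro sum_mem[OF additive_subgroup_int_span] of_int_mult_mem[OF additive_subgroup_int_span]
        gen) auto
  finally show "x * y \<in> int_span (m * m') ?g" .
qed

lemma fin_gen_subset_int_span:
  assumes "fin_gen I"
  obtains m g where "I \<subseteq> int_span m g"
proof -
  obtain G where G: "finite G" "I = {\<Sum>x\<in>G. of_int (c x) * x | c :: 'a \<Rightarrow> int. True}"
    using assms unfolding fin_gen_def by blast
  obtain h where h: "bij_betw h {..<card G} G"
    using ex_bij_betw_nat_finite[OF G(1)] by (auto simp: atLeast0LessThan)
  have "I \<subseteq> int_span (card G) h"
  proof
    fix u assume "u \<in> I"
    then obtain c :: "'a \<Rightarrow> int" where u: "u = (\<Sum>x\<in>G. of_int (c x) * x)" using G(2) by blast
    show "u \<in> int_span (card G) h"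
      unfolding u sum.reindex_bij_betw[OF h, symmetric] by (rule int_spanI) simp
  qed
  then show ?thesis by (rule that)
qed

lemma set_pow_subset_int_span:
  assumes "additive_subgroup I" "fin_gen I"
  obtains m g where "set_pow I (Suc k) \<subseteq> int_span m g"
proof -
  obtain m0 g0 where I: "I \<subseteq> int_span m0 g0"
    using assms(2) by (rule fin_gen_subset_int_span)
  have "\<exists>m g. set_pow I (Suc k) \<subseteq> int_span m g"
  proof (induction k)
    case 0
    then show ?case using I set_pow_1[OF assms(1)] by auto
  next
    case (Suc k)
    then obtain m g where "set_pow I (Suc k) \<subseteq> int_span m g" by blast
    then have "set_pow I (Suc (Suc k)) \<subseteq> set_mult (int_span m g) (int_span m0 g0)"
      using set_mult_mono[OF _ I] by simp
    also have "\<dots> \<subseteq> int_span (m * m0) (\<lambda>k. g (k div m0) * g0 (k mod m0))"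
      by (rule set_mult_int_span)
    finally show ?case by blast
  qed
  then show ?thesis using that by blast
qed

lemma bij_betw_int_span:
  assumes "int_independent n b"
  shows "bij_betw (\<lambda>c. \<Sum>i<n. of_int (c i) * b i) {c. \<forall>i\<ge>n. c i = 0} (int_span n b)"
  unfolding bij_betw_def
proof
  show "inj_on (\<lambda>c. \<Sum>i<n. of_int (c i) * b i) {c. \<forall>i\<ge>n. c i = 0}"
  proof (rule inj_onI, rule ext)
    fix c c' i
    assume c: "c \<in> {c. \<forall>i\<ge>n. c i = 0}" and c': "c' \<in> {c. \<forall>i\<ge>n. c i = 0}"
      and eq: "(\<Sum>i<n. of_int (c i) * b i) = (\<Sum>i<n. of_int (c' i) * b i)"
    have "(\<Sum>i<n. of_int (c i - c' i) * b i) = 0"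
      using eq by (simp add: left_diff_distrib sum_subtractf)
    then have "c i - c' i = 0" if "i < n" for i
      using int_independentD[OF assms _ that, where c = "\<lambda>i. c i - c' i"] by simp
    then show "c i = c' i" using c c' by (cases "i < n") auto
  qed
  show "(\<lambda>c. \<Sum>i<n. of_int (c i) * b i) ` {c. \<forall>i\<ge>n. c i = 0} = int_span n b"
  proof (intro equalityI subsetI)
    fix x assume "x \<in> int_span n b"
    then obtain c where "x = (\<Sum>i<n. of_int (c i) * b i)" by (rule int_spanE)
    then have "x = (\<Sum>i<n. of_int (if i < n then c i else 0) * b i)" by simp
    then show "x \<in> (\<lambda>c. \<Sum>i<n. of_int (c i) * b i) ` {c. \<forall>i\<ge>n. c i = 0}"
      by (rule image_eqI[where x = "\<lambda>i. if i < n then c i else 0"]) simp_all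
  qed (auto intro: int_spanI)
qed

lemma int_independent_inj_on:
  assumes "int_independent n b"
  shows "inj_on b {..<n}"
proof (rule inj_onI, rule ccontr)
  fix i j assume i: "i \<in> {..<n}" and j: "j \<in> {..<n}" and eq: "b i = b j" and "i \<noteq> j"
  define c where "c k = (if k = i then 1 else if k = j then -1 else 0 :: int)" for k
  have "(\<Sum>k<n. of_int (c k) * b k) = (\<Sum>k<n. (if k = i then b k else 0) - (if k = j then b k else 0))"
    by (rule sum.cong) (auto simp: c_def \<open>i \<noteq> j\<close>)
  also have "\<dots> = 0" using i j eq by (simp add: sum_subtractf)
  finally have "c i = 0" using assms i unfolding int_independent_def by blast
  then show False by (simp add: c_def)
qed

lemma blowup_eq_colon_pow_if_int_span:
  assumes "additive_subgroup I" "blowup I = int_span n b"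
  obtains K where "blowup I = colon_pow I K"
proof -
  have "\<exists>k. b i \<in> colon_pow I k" if "i < n" for i
    using int_span_generator[OF that, of b] assms(2) unfolding blowup_def by blast
  then have "\<forall>i\<in>{..<n}. \<exists>k. b i \<in> colon_pow I k" by blast
  from bchoice[OF this] obtain k where k: "\<forall>i\<in>{..<n}. b i \<in> colon_pow I (k i)" ..
  have "k i \<le> (\<Sum>j<n. k j)" if "i < n" for i
    using that by (intro member_le_sum) simp_all
  then have "b i \<in> colon_pow I (\<Sum>j<n. k j)" if "i < n" for i
    using k that colon_pow_mono[of "k i" "\<Sum>j<n. k j" I] by blast
  moreover have "additive_subgroup (colon_pow I (\<Sum>j<n. k j))"
    using subring_colon_pow[OF assms(1)] unfolding subring_def by blast
  ultimately have "int_span n b \<subseteq> colon_pow I (\<Sum>j<n. k j)"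
    by (intro int_span_least)
  then have "blowup I = colon_pow I (\<Sum>j<n. k j)"
    using assms(2) colon_pow_subset_blowup[of I] by (intro equalityI) simp_all
  then show ?thesis by (rule that)
qed

section \<open>Number fields as $\mathbb{Q}$-vector spaces\<close>

lemma rat_eq_quotient: "q = of_int (fst (quotient_of q)) / of_int (snd (quotient_of q))"
  by (metis prod.collapse quotient_of_div)

lemma rat_common_denominator:
  fixes S :: "rat set"
  assumes "finite S"
  shows "\<exists>D::int. D \<noteq> 0 \<and> (\<forall>q\<in>S. of_int D * q \<in> \<int>)"
proof (intro exI conjI ballI)
  let ?den = "\<lambda>q. snd (quotient_of q)"
  have den: "?den q > 0" for q by (rule quotient_of_denom_pos')
  then have "?den q \<noteq> 0" for q by (metis less_irrefl)
  then show "(\<Prod>q\<in>S. ?den q) \<noteq> 0" by (simp add: prod_zero_iff[OF assms])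
  fix q assume "q \<in> S"
  have "of_int (\<Prod>q\<in>S. ?den q) * q = of_int (\<Prod>q'\<in>S - {q}. ?den q') * (of_int (?den q) * q)"
    by (simp add: prod.remove[OF assms \<open>q \<in> S\<close>] ac_simps)
  also have "of_int (?den q) * q = of_int (fst (quotient_of q))"
    using den[of q] by (subst (2) rat_eq_quotient[of q]) simp
  finally show "of_int (\<Prod>q\<in>S. ?den q) * q \<in> \<int>" by (metis Ints_mult Ints_of_int)
qed

locale number_field =
  assumes number_field_type: "number_field_type TYPE('a::comm_ring_1)"
begin

lemma zero_neq_one_nf: "(0::'a) \<noteq> 1"
  and mult_inverse_ex: "(x::'a) \<noteq> 0 \<Longrightarrow> \<exists>y. x * y = 1"
  and of_nat_eq_0_nf: "(of_nat n :: 'a) = 0 \<Longrightarrow> n = 0"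
  using number_field_type unfolding number_field_type_def by auto

definition recip :: "'a \<Rightarrow> 'a" where
  "recip x = (SOME y. x * y = 1)"

lemma mult_recip: "x \<noteq> 0 \<Longrightarrow> x * recip x = 1"
  unfolding recip_def by (rule someI_ex) (rule mult_inverse_ex)

lemma mult_eq_0_nf: "(x::'a) * y = 0 \<longleftrightarrow> x = 0 \<or> y = 0"
proof (intro iffI)
  assume xy: "x * y = 0"
  show "x = 0 \<or> y = 0"
  proof (cases "x = 0")
    case False
    then have "recip x * x = 1" using mult_recip[OF False] by (simp only: mult.commute)
    then have "y = recip x * (x * y)" by (simp flip: mult.assoc)
    then show ?thesis by (simp add: xy)
  qed simp
qed auto

lemma mult_left_cancel_nf: "(c::'a) \<noteq> 0 \<Longrightarrow> c * x = c * y \<Longrightarrow> x = y"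
  using mult_eq_0_nf[of c "x - y"] by (simp add: right_diff_distrib)

lemma of_int_eq_0_nf: "(of_int n :: 'a) = 0 \<longleftrightarrow> n = 0"
proof
  assume n: "(of_int n :: 'a) = 0"
  have "(of_int \<bar>n\<bar> :: 'a) = 0"
    using n by (cases "n \<ge> 0") simp_all
  moreover have "(of_nat (nat \<bar>n\<bar>) :: 'a) = of_int \<bar>n\<bar>"
    using of_int_of_nat_eq[of "nat \<bar>n\<bar>", where 'a = 'a] by simp
  ultimately have "(of_nat (nat \<bar>n\<bar>) :: 'a) = 0" by simp
  then have "nat \<bar>n\<bar> = 0" by (rule of_nat_eq_0_nf)
  then show "n = 0" by simp
qed simp

text \<open>The type class only provides \<^term>\<open>of_int\<close>; the embedding of $\mathbb{Q}$ needs the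
  inverses granted by \<^const>\<open>number_field_type\<close>.\<close>

definition of_rat_nf :: "rat \<Rightarrow> 'a" where
  "of_rat_nf q = of_int (fst (quotient_of q)) * recip (of_int (snd (quotient_of q)))"

lemma of_rat_nf_denom: "of_int (snd (quotient_of q)) * of_rat_nf q = of_int (fst (quotient_of q))"
proof -
  have "snd (quotient_of q) \<noteq> 0" using quotient_of_denom_pos'[of q] by simp
  then show ?thesis
    unfolding of_rat_nf_def using mult_recip of_int_eq_0_nf by (simp add: mult.left_commute)
qed

lemma of_rat_nf_unique:
  assumes n: "n \<noteq> 0" and q: "q = of_int m / of_int n" and y: "of_int n * y = (of_int m :: 'a)"
  shows "of_rat_nf q = y"
proof -
  obtain a b where ab: "quotient_of q = (a, b)" by (cases "quotient_of q")
  have b: "b \<noteq> 0" using quotient_of_denom_pos[OF ab] by simp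
  have "(of_int m :: rat) / of_int n = of_int a / of_int b"
    using quotient_of_div[OF ab] q by simp
  then have "(of_int (m * b) :: rat) = of_int (a * n)"
    using n b by (simp add: divide_eq_eq eq_divide_eq)
  then have mb: "m * b = a * n" by (simp only: of_int_eq_iff)
  have "of_int n * (of_int b * y) = (of_int (m * b) :: 'a)"
    by (simp add: y[symmetric] ac_simps)
  also have "\<dots> = of_int n * (of_int b * of_rat_nf q)"
    using of_rat_nf_denom[of q] ab mb by (simp add: ac_simps)
  finally have "of_int b * y = of_int b * of_rat_nf q"
    using mult_left_cancel_nf n of_int_eq_0_nf by blast
  then show ?thesis
    using mult_left_cancel_nf b of_int_eq_0_nf by metis
qed

lemma of_rat_nf_add: "of_rat_nf (p + q) = of_rat_nf p + of_rat_nf q"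
proof -
  obtain a b c d where p: "quotient_of p = (a, b)" and q: "quotient_of q = (c, d)"
    by (cases "quotient_of p", cases "quotient_of q")
  have "b > 0" "d > 0" using quotient_of_denom_pos p q by blast+
  show ?thesis
  proof (rule of_rat_nf_unique)
    show "b * d \<noteq> 0" using \<open>b > 0\<close> \<open>d > 0\<close> by simp
    show "p + q = of_int (a * d + c * b) / of_int (b * d)"
      using quotient_of_div[OF p] quotient_of_div[OF q] \<open>b > 0\<close> \<open>d > 0\<close> by (simp add: field_simps)
    have "of_int (b * d) * (of_rat_nf p + of_rat_nf q)
        = of_int d * (of_int b * of_rat_nf p) + of_int b * (of_int d * of_rat_nf q :: 'a)"
      by (simp add: algebra_simps)
    also have "\<dots> = of_int (a * d + c * b)"
      using of_rat_nf_denom[of p] of_rat_nf_denom[of q] p q by simp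
    finally show "of_int (b * d) * (of_rat_nf p + of_rat_nf q) = (of_int (a * d + c * b) :: 'a)" .
  qed
qed

lemma of_rat_nf_mult: "of_rat_nf (p * q) = of_rat_nf p * of_rat_nf q"
proof -
  obtain a b c d where p: "quotient_of p = (a, b)" and q: "quotient_of q = (c, d)"
    by (cases "quotient_of p", cases "quotient_of q")
  have "b > 0" "d > 0" using quotient_of_denom_pos p q by blast+
  show ?thesis
  proof (rule of_rat_nf_unique)
    show "b * d \<noteq> 0" using \<open>b > 0\<close> \<open>d > 0\<close> by simp
    show "p * q = of_int (a * c) / of_int (b * d)"
      using quotient_of_div[OF p] quotient_of_div[OF q] by simp
    have "of_int (b * d) * (of_rat_nf p * of_rat_nf q)
        = (of_int b * of_rat_nf p) * (of_int d * of_rat_nf q :: 'a)"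
      by (simp add: ac_simps)
    also have "\<dots> = of_int (a * c)"
      using of_rat_nf_denom[of p] of_rat_nf_denom[of q] p q by simp
    finally show "of_int (b * d) * (of_rat_nf p * of_rat_nf q) = (of_int (a * c) :: 'a)" .
  qed
qed

lemma of_rat_nf_of_int [simp]: "of_rat_nf (of_int n) = of_int n"
  by (rule of_rat_nf_unique[of 1]) simp_all

lemma of_rat_nf_1 [simp]: "of_rat_nf 1 = 1"
  using of_rat_nf_of_int[of 1] by simp

definition scaleQ :: "rat \<Rightarrow> 'a \<Rightarrow> 'a" where
  "scaleQ q x = of_rat_nf q * x"

sublocale Q: vector_space scaleQ
  by unfold_locales (auto simp: scaleQ_def of_rat_nf_add of_rat_nf_mult algebra_simps)

lemma scaleQ_of_int: "scaleQ (of_int n) x = of_int n * x"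
  by (simp add: scaleQ_def)

lemma scaleQ_mult_left: "scaleQ q x * y = scaleQ q (x * y)"
  and scaleQ_mult_right: "x * scaleQ q y = scaleQ q (x * y)"
  by (simp_all add: scaleQ_def ac_simps)

lemma of_int_mult_mem_Q_span: "x \<in> Q.span B \<Longrightarrow> of_int k * x \<in> Q.span B"
  using Q.span_scale[of x B "of_int k"] by (simp add: scaleQ_of_int)

lemma int_span_subset_Q_span: "int_span n b \<subseteq> Q.span (b ` {..<n})"
proof
  fix x assume "x \<in> int_span n b"
  then obtain c where x: "x = (\<Sum>i<n. of_int (c i) * b i)" by (rule int_spanE)
  have "b i \<in> Q.span (b ` {..<n})" if "i < n" for i
    using that by (intro Q.span_base) simp
  then show "x \<in> Q.span (b ` {..<n})"
    unfolding x by (intro Q.span_sum of_int_mult_mem_Q_span) simp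
qed

lemma finite_Q_spanning_set: "\<exists>B. finite B \<and> Q.span B = UNIV"
proof -
  obtain B :: "'a set" where B: "finite B"
    and span: "\<And>x. \<exists>(d::int) c. d \<noteq> 0 \<and> of_int d * x = (\<Sum>b\<in>B. of_int (c b) * b)"
    using number_field_type unfolding number_field_type_def by blast
  have "x \<in> Q.span B" for x
  proof -
    obtain d c where d: "d \<noteq> 0" and dx: "of_int d * x = (\<Sum>b\<in>B. of_int (c b) * b)"
      using span by blast
    have "of_int d * x \<in> Q.span B"
      unfolding dx by (intro Q.span_sum of_int_mult_mem_Q_span Q.span_base)
    then have "scaleQ (1 / of_int d) (of_int d * x) \<in> Q.span B" by (rule Q.span_scale)
    moreover have "of_rat_nf (1 / of_int d) * of_int d = (1 :: 'a)"
      using of_rat_nf_mult[of "1 / of_int d" "of_int d"] d by simp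
    then have "scaleQ (1 / of_int d) (of_int d * x) = x"
      by (simp add: scaleQ_def flip: mult.assoc)
    ultimately show ?thesis by simp
  qed
  then show ?thesis using B by blast
qed

definition Q_basis :: "'a set" where
  "Q_basis = (SOME B. finite B \<and> Q.independent B \<and> Q.span B = UNIV)"

lemma Q_basis: "finite Q_basis \<and> Q.independent Q_basis \<and> Q.span Q_basis = UNIV"
proof -
  obtain B where B: "finite B" "Q.span B = UNIV" using finite_Q_spanning_set by blast
  obtain B' where "B' \<subseteq> B" "Q.independent B'" "B \<subseteq> Q.span B'"
    using Q.maximal_independent_subset[of B] by blast
  then have "finite B' \<and> Q.independent B' \<and> Q.span B' = UNIV"
    using B finite_subset Q.span_mono Q.span_span by (metis top.extremum_uniqueI)
  then show ?thesis unfolding Q_basis_def by (rule someI)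
qed

sublocale Q: finite_dimensional_vector_space scaleQ Q_basis
  by unfold_locales (use Q_basis in auto)

end

section \<open>Subgroups of finitely generated groups are free\<close>

lemma int_set_dvd_generator:
  fixes C :: "int set"
  assumes diff: "\<And>x y. x \<in> C \<Longrightarrow> y \<in> C \<Longrightarrow> x - y \<in> C"
    and mult: "\<And>k x. x \<in> C \<Longrightarrow> k * x \<in> C"
    and "c \<in> C"
  shows "\<exists>d\<in>C. \<forall>k\<in>C. d dvd k"
proof (cases "C \<subseteq> {0}")
  case True
  then show ?thesis using \<open>c \<in> C\<close> by blast
next
  case False
  then obtain k where "k \<in> C" "k \<noteq> 0" by blast
  moreover have "sgn k * k = int (nat \<bar>k\<bar>)" by (simp add: sgn_if)
  ultimately have "int (nat \<bar>k\<bar>) \<in> C \<and> 0 < nat \<bar>k\<bar>"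
    using mult[OF \<open>k \<in> C\<close>, of "sgn k"] \<open>k \<noteq> 0\<close> by simp
  then have ex: "\<exists>n. int n \<in> C \<and> 0 < n" by blast
  define d where "d = int (LEAST n. int n \<in> C \<and> 0 < n)"
  have d: "d \<in> C" "0 < d" using LeastI_ex[OF ex] by (simp_all add: d_def)
  have d_min: "d \<le> k" if "k \<in> C" "0 < k" for k
    using Least_le[of "\<lambda>n. int n \<in> C \<and> 0 < n" "nat k"] that by (simp add: d_def)
  have "d dvd k" if k: "k \<in> C" for k
  proof -
    have "k mod d = k - (k div d) * d" by (simp add: minus_div_mult_eq_mod)
    then have "k mod d \<in> C" using diff[OF k mult[OF d(1)]] by simp
    moreover have "0 \<le> k mod d" "k mod d < d" using d(2) by simp_all
    ultimately have "k mod d = 0" using d_min by (meson not_le le_less)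
    then show ?thesis by auto
  qed
  then show ?thesis using d(1) by blast
qed

lemma last_coefficient_generator:
  assumes H: "additive_subgroup H"
  shows "\<exists>s0\<in>int_span m g. \<exists>d. s0 + of_int d * g m \<in> H
    \<and> (\<forall>s\<in>int_span m g. \<forall>k. s + of_int k * g m \<in> H \<longrightarrow> d dvd k)"
proof -
  define C where "C = {k. \<exists>s\<in>int_span m g. s + of_int k * g m \<in> H}"
  have "x - y \<in> C" if xy: "x \<in> C" "y \<in> C" for x y
  proof -
    obtain s t where st: "s \<in> int_span m g" "t \<in> int_span m g"
      and H_st: "s + of_int x * g m \<in> H" "t + of_int y * g m \<in> H"
      using xy unfolding C_def by blast
    have "(s - t) + of_int (x - y) * g m = (s + of_int x * g m) - (t + of_int y * g m)"
      by (simp add: algebra_simps)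
    also have "\<dots> \<in> H" using H H_st by (rule diff_mem)
    finally show ?thesis
      using diff_mem[OF additive_subgroup_int_span st] unfolding C_def by blast
  qed
  moreover have "k * x \<in> C" if x: "x \<in> C" for k x
  proof -
    obtain s where s: "s \<in> int_span m g" and H_s: "s + of_int x * g m \<in> H"
      using x unfolding C_def by blast
    have "of_int k * s + of_int (k * x) * g m = of_int k * (s + of_int x * g m)"
      by (simp add: algebra_simps)
    also have "\<dots> \<in> H" using H H_s by (rule of_int_mult_mem)
    finally show ?thesis
      using of_int_mult_mem[OF additive_subgroup_int_span s] unfolding C_def by blast
  qed
  moreover have "0 \<in> C"
    using H additive_subgroup_int_span unfolding C_def additive_subgroup_def by force
  ultimately have "\<exists>d\<in>C. \<forall>k\<in>C. d dvd k"
    by (rule int_set_dvd_generator)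
  then show ?thesis unfolding C_def by blast
qed

lemma int_span_Suc_extend:
  assumes H: "additive_subgroup H" and H_sub: "H \<subseteq> int_span (Suc m) g"
    and kernel: "H \<inter> int_span m g = int_span n b"
    and s0: "s0 \<in> int_span m g" and h0: "s0 + of_int d * g m \<in> H"
    and dvd: "\<And>s k. s \<in> int_span m g \<Longrightarrow> s + of_int k * g m \<in> H \<Longrightarrow> d dvd k"
  shows "H = int_span (Suc n) (b(n := s0 + of_int d * g m))"
proof
  show "int_span (Suc n) (b(n := s0 + of_int d * g m)) \<subseteq> H"
    using int_span_generator[of _ n b] kernel h0 by (intro int_span_least[OF H]) (auto simp: less_Suc_eq)
  show "H \<subseteq> int_span (Suc n) (b(n := s0 + of_int d * g m))"
  proof
    fix h assume h: "h \<in> H"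
    then obtain s k where s: "s \<in> int_span m g" and hs: "h = s + of_int k * g m"
      using H_sub int_span_Suc by blast
    have "d dvd k" using dvd s h hs by blast
    then obtain q where k: "k = d * q" by (rule dvdE)
    have "h - of_int q * (s0 + of_int d * g m) = s - of_int q * s0"
      unfolding hs k by (simp add: algebra_simps)
    moreover have "h - of_int q * (s0 + of_int d * g m) \<in> H"
      using H h h0 by (intro diff_mem of_int_mult_mem)
    moreover have "s - of_int q * s0 \<in> int_span m g"
      using s s0 by (intro diff_mem of_int_mult_mem additive_subgroup_int_span)
    ultimately have "h - of_int q * (s0 + of_int d * g m) \<in> int_span n b"
      using kernel by auto
    moreover have "int_span n (b(n := s0 + of_int d * g m)) = int_span n b"
      by (rule int_span_cong) simp
    ultimately show "h \<in> int_span (Suc n) (b(n := s0 + of_int d * g m))"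
      unfolding int_span_Suc by (intro exI[of _ "h - of_int q * (s0 + of_int d * g m)"] exI[of _ q]) simp
  qed
qed

lemma int_independent_Suc_extend:
  assumes no_torsion: "\<And>s k. s \<in> int_span m g \<Longrightarrow> s + of_int k * g m \<in> int_span m g \<Longrightarrow> k = 0"
    and b: "int_independent n b" "int_span n b \<subseteq> int_span m g"
    and s0: "s0 \<in> int_span m g" and "d \<noteq> 0"
  shows "int_independent (Suc n) (b(n := s0 + of_int d * g m))"
  unfolding int_independent_def
proof (rule allI, rule impI)
  fix e assume e: "(\<Sum>i<Suc n. of_int (e i) * (b(n := s0 + of_int d * g m)) i) = 0"
  define u where "u = (\<Sum>i<n. of_int (e i) * b i)"
  have u0: "u + of_int (e n) * (s0 + of_int d * g m) = 0"
    using e by (simp add: u_def)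
  have u: "u \<in> int_span m g" using b(2) int_spanI u_def by blast
  have "(u + of_int (e n) * s0) + of_int (e n * d) * g m = 0"
    using u0 by (simp add: algebra_simps)
  moreover have "u + of_int (e n) * s0 \<in> int_span m g"
    using u s0 additive_subgroup_int_span[of m g] of_int_mult_mem[OF additive_subgroup_int_span]
    unfolding additive_subgroup_def by blast
  ultimately have "e n * d = 0"
    using no_torsion additive_subgroup_int_span[of m g] unfolding additive_subgroup_def by metis
  then have "e n = 0" using \<open>d \<noteq> 0\<close> by simp
  then have sum0: "(\<Sum>i<n. of_int (e i) * b i) = 0" using u0 by (simp add: u_def)
  have "e i = 0" if "i < n" for i using int_independentD[OF b(1) sum0 that] .
  then show "\<forall>i<Suc n. e i = 0" using \<open>e n = 0\<close> less_Suc_eq by auto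
qed

lemma subgroup_int_span_Suc_free:
  assumes H: "additive_subgroup H" and H_sub: "H \<subseteq> int_span (Suc m) g"
    and no_torsion: "\<And>s k. s \<in> int_span m g \<Longrightarrow> s + of_int k * g m \<in> int_span m g \<Longrightarrow> k = 0"
    and b: "int_independent n b" and kernel: "H \<inter> int_span m g = int_span n b"
  shows "\<exists>n b. int_independent n b \<and> H = int_span n b"
proof -
  obtain s0 d where s0: "s0 \<in> int_span m g" "s0 + of_int d * g m \<in> H"
    and dvd: "\<And>s k. s \<in> int_span m g \<Longrightarrow> s + of_int k * g m \<in> H \<Longrightarrow> d dvd k"
    using last_coefficient_generator[OF H, of m g] by blast
  show ?thesis
  proof (cases "d = 0")
    case True
    have "H \<subseteq> int_span m g"
    proof
      fix h assume "h \<in> H"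
      then obtain s k where s: "s \<in> int_span m g" and h: "h = s + of_int k * g m"
        using H_sub int_span_Suc by blast
      then have "k = 0" using dvd[OF s] \<open>h \<in> H\<close> True by simp
      then show "h \<in> int_span m g" using s h by simp
    qed
    then show ?thesis using b kernel by blast
  next
    case False
    have "H = int_span (Suc n) (b(n := s0 + of_int d * g m))"
      using H H_sub kernel s0 dvd by (rule int_span_Suc_extend)
    moreover have "int_independent (Suc n) (b(n := s0 + of_int d * g m))"
    proof (rule int_independent_Suc_extend[OF no_torsion b _ s0(1) False])
      show "int_span n b \<subseteq> int_span m g" using kernel by blast
    qed
    ultimately show ?thesis by blast
  qed
qed

context number_field
begin

lemma int_span_Suc_subset_if_torsion:
  assumes "N \<noteq> 0" "of_int N * g m \<in> int_span m g"
  shows "int_span (Suc m) g \<subseteq> int_span m (\<lambda>i. recip (of_int N) * g i)"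
proof (rule int_span_least[OF additive_subgroup_int_span])
  have N: "(of_int N :: 'a) \<noteq> 0" using assms(1) of_int_eq_0_nf by simp
  have g: "g i = of_int N * (recip (of_int N) * g i)" for i
    by (simp add: mult_recip[OF N] flip: mult.assoc)
  fix i assume "i < Suc m"
  then consider "i < m" | "i = m" by linarith
  then show "g i \<in> int_span m (\<lambda>i. recip (of_int N) * g i)"
  proof cases
    case 1
    then show ?thesis
      using g int_span_generator[OF 1] of_int_mult_mem[OF additive_subgroup_int_span] by metis
  next
    case 2
    obtain c where c: "of_int N * g m = (\<Sum>j<m. of_int (c j) * g j)"
      using assms(2) by (rule int_spanE)
    have "g m = recip (of_int N) * (of_int N * g m)"
      by (simp add: mult_recip[OF N] mult.commute flip: mult.assoc)
    also have "\<dots> = (\<Sum>j<m. of_int (c j) * (recip (of_int N) * g j))"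
      unfolding c by (simp add: sum_distrib_left ac_simps)
    finally show ?thesis unfolding 2 by (rule int_spanI)
  qed
qed

text \<open>If a nonzero multiple of the last generator $g_m$
  lies in the span of the others, dividing all generators by it makes $g_m$ redundant. Otherwise
  the $g_m$-coordinate is well defined on $H$, its values form a subgroup $d\mathbb{Z}$, and a basis
  of the kernel $H \cap \langle g_0, \ldots, g_{m-1} \rangle$ extends by one element of $H$ with
  coordinate $d$.\<close>

theorem subgroup_int_span_free:
  fixes H :: "'a set"
  assumes "additive_subgroup H" "H \<subseteq> int_span m g"
  shows "\<exists>n b. int_independent n b \<and> H = int_span n b"
  using assms
proof (induction m arbitrary: g H)
  case 0
  then have "H = {0}" by (auto simp: additive_subgroup_def int_span_0)
  then show ?case by (intro exI[of _ 0]) (auto simp: int_independent_def int_span_0)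
next
  case (Suc m)
  note H = Suc.prems(1) and H_sub = Suc.prems(2)
  show ?case
  proof (cases "\<exists>N. N \<noteq> 0 \<and> of_int N * g m \<in> int_span m g")
    case True
    then obtain N where "N \<noteq> 0" "of_int N * g m \<in> int_span m g" by blast
    then have "H \<subseteq> int_span m (\<lambda>i. recip (of_int N) * g i)"
      using H_sub int_span_Suc_subset_if_torsion by blast
    then show ?thesis by (rule Suc.IH[OF H])
  next
    case False
    then have no_torsion: "k = 0" if "s \<in> int_span m g" "s + of_int k * g m \<in> int_span m g" for s k
      using diff_mem[OF additive_subgroup_int_span that(2,1)] by auto
    have "additive_subgroup (H \<inter> int_span m g)"
      using H additive_subgroup_int_span unfolding additive_subgroup_def by blast
    then obtain n b where b: "int_independent n b" and kernel: "H \<inter> int_span m g = int_span n b"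
      using Suc.IH by blast
    show ?thesis by (rule subgroup_int_span_Suc_free[OF H H_sub no_torsion b kernel])
  qed
qed

end

section \<open>The trace\<close>

context number_field
begin

lemma Q_independent_if_int_independent:
  assumes b: "int_independent n b"
  shows "Q.independent (b ` {..<n})"
  unfolding Q.independent_explicit
proof (intro conjI allI impI ballI)
  show "finite (b ` {..<n})" by simp
  fix c v assume sum: "(\<Sum>v\<in>b ` {..<n}. scaleQ (c v) v) = 0" and v: "v \<in> b ` {..<n}"
  obtain D :: int where D: "D \<noteq> 0" and int: "\<And>i. i < n \<Longrightarrow> of_int D * c (b i) \<in> \<int>"
    using rat_common_denominator[of "c ` b ` {..<n}"] by auto
  have "\<forall>i. \<exists>z. i < n \<longrightarrow> of_int D * c (b i) = of_int z"
    using int by (metis Ints_cases)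
  then obtain z where z: "\<And>i. i < n \<Longrightarrow> of_int D * c (b i) = of_int (z i)"
    by (metis choice)
  have "(\<Sum>i<n. scaleQ (c (b i)) (b i)) = 0"
    using sum sum.reindex[OF int_independent_inj_on[OF b], of "\<lambda>v. scaleQ (c v) v"] by simp
  then have "scaleQ (of_int D) (\<Sum>i<n. scaleQ (c (b i)) (b i)) = 0" by simp
  then have "(\<Sum>i<n. of_int (z i) * b i) = 0"
    by (simp add: Q.scale_sum_right z flip: scaleQ_of_int)
  then have "z i = 0" if "i < n" for i
    using b that unfolding int_independent_def by blast
  then have "c (b i) = 0" if "i < n" for i
    using z[OF that] D that by simp
  then show "c v = 0" using v by auto
qed

lemma Q_representation_sum:
  assumes "Q.independent B" "Q.span B = UNIV"
  shows "Q.representation B (\<Sum>i\<in>S. scaleQ (a i) (v i)) c = (\<Sum>i\<in>S. a i * Q.representation B (v i) c)"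
  using Q.representation_sum[OF assms(1), of S "\<lambda>i. scaleQ (a i) (v i)"]
    Q.representation_scale[OF assms(1)] assms(2) by simp

lemma Q_sum_representation:
  assumes "finite B" "Q.independent B" "Q.span B = UNIV"
  shows "(\<Sum>c\<in>B. scaleQ (Q.representation B v c) c) = v"
  using Q.sum_representation_eq[OF assms(2) _ assms(1)] assms(3) by simp

definition trace :: "'a \<Rightarrow> rat" where
  "trace x = (\<Sum>c\<in>Q_basis. Q.representation Q_basis (x * c) c)"

lemma trace_eq_basis:
  assumes L: "finite L" "Q.independent L" "Q.span L = UNIV"
  shows "trace x = (\<Sum>l\<in>L. Q.representation L (x * l) l)"
proof -
  let ?R = "Q.representation Q_basis" and ?S = "Q.representation L"
  have "?R (x * c) c = (\<Sum>l\<in>L. ?S c l * ?R (x * l) c)" for c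
  proof -
    have "x * c = x * (\<Sum>l\<in>L. scaleQ (?S c l) l)"
      using Q_sum_representation[OF L, of c] by simp
    also have "\<dots> = (\<Sum>l\<in>L. scaleQ (?S c l) (x * l))"
      by (simp add: sum_distrib_left scaleQ_mult_right)
    finally have "x * c = (\<Sum>l\<in>L. scaleQ (?S c l) (x * l))" .
    then show ?thesis using Q_representation_sum[OF Q.independent_Basis Q.span_Basis] by simp
  qed
  moreover have "?S (x * l) l = (\<Sum>c\<in>Q_basis. ?R (x * l) c * ?S c l)" for l
  proof -
    have "?S (x * l) l = ?S (\<Sum>c\<in>Q_basis. scaleQ (?R (x * l) c) c) l"
      using Q_sum_representation[of Q_basis "x * l"] Q_basis by simp
    also have "\<dots> = (\<Sum>c\<in>Q_basis. ?R (x * l) c * ?S c l)"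
      by (rule Q_representation_sum[OF L(2,3)])
    finally show ?thesis .
  qed
  ultimately show ?thesis
    unfolding trace_def by (simp add: sum.swap[of _ L] mult.commute)
qed

lemma trace_int_if_stabilizes_lattice:
  assumes b: "int_independent n b" and span: "Q.span (b ` {..<n}) = UNIV"
    and stable: "\<And>i. i < n \<Longrightarrow> x * b i \<in> int_span n b"
  shows "trace x \<in> \<int>"
proof -
  let ?B = "b ` {..<n}"
  have inj: "inj_on b {..<n}" using int_independent_inj_on[OF b] .
  have indep: "Q.independent ?B" using Q_independent_if_int_independent[OF b] .
  have "Q.representation ?B (x * b i) (b i) \<in> \<int>" if i: "i < n" for i
  proof -
    obtain c where c: "x * b i = (\<Sum>j<n. of_int (c j) * b j)"
      using stable[OF i] by (rule int_spanE)
    have "Q.representation ?B (x * b i) (b i)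
        = (\<Sum>j<n. of_int (c j) * Q.representation ?B (b j) (b i))"
      unfolding c using Q_representation_sum[OF indep span, of "\<lambda>j. of_int (c j)"]
      by (simp add: scaleQ_of_int)
    also have "\<dots> = (\<Sum>j<n. if j = i then of_int (c j) else 0)"
      using inj i by (intro sum.cong) (auto simp: Q.representation_basis[OF indep] inj_on_def)
    finally show ?thesis using i by simp
  qed
  moreover have "trace x = (\<Sum>i<n. Q.representation ?B (x * b i) (b i))"
    using trace_eq_basis[OF _ indep span] sum.reindex[OF inj] by simp
  ultimately show ?thesis by (auto intro: Ints_sum)
qed

lemma trace_add: "trace (x + y) = trace x + trace y"
  and trace_scaleQ: "trace (scaleQ q x) = q * trace x"
  using Q.representation_add[OF Q.independent_Basis] Q.representation_scale[OF Q.independent_Basis]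
  by (simp_all add: trace_def distrib_right scaleQ_mult_left sum.distrib sum_distrib_left Q.span_Basis)

lemma trace_0: "trace 0 = 0"
  using trace_scaleQ[of 0 0] by simp

lemma trace_sum: "trace (\<Sum>i\<in>S. scaleQ (a i) (v i)) = (\<Sum>i\<in>S. a i * trace (v i))"
  by (induction S rule: infinite_finite_induct)
    (simp_all add: trace_0 trace_add trace_scaleQ)

lemma trace_diff: "trace (x - y) = trace x - trace y"
  using trace_add[of "x - y" y] by simp

lemma trace_1_neq_0: "trace 1 \<noteq> 0"
proof -
  have "trace 1 = of_nat (card Q_basis)"
    unfolding trace_def
    by (simp add: Q.representation_basis[OF Q.independent_Basis] cong: sum.cong)
  moreover have "Q_basis \<noteq> {}"
  proof
    assume "Q_basis = {}"
    then have "(1::'a) \<in> Q.span {}" using Q.span_Basis by simp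
    then show False using zero_neq_one_nf by simp
  qed
  ultimately show ?thesis using Q.finite_Basis by simp
qed

end

section \<open>Subrings with integral traces\<close>

context number_field
begin

lemma trace_mult_eq_0_on_span:
  assumes "\<And>w. w \<in> W \<Longrightarrow> trace (y * w) = 0" "v \<in> Q.span W"
  shows "trace (y * v) = 0"
  using assms(2)
  by (induction rule: Q.span_induct_alt)
    (simp_all add: assms(1) distrib_left scaleQ_mult_right trace_0 trace_add trace_scaleQ)

lemma Q_span_mult_closed:
  assumes T: "subring T" and x: "x \<in> Q.span T" and y: "y \<in> Q.span T"
  shows "x * y \<in> Q.span T"
proof -
  have left: "x * y \<in> Q.span T" if "\<And>t. t \<in> T \<Longrightarrow> t * y \<in> Q.span T" "x \<in> Q.span T" for x y
    using that(2)
    by (induction rule: Q.span_induct_alt)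
      (simp_all add: that(1) distrib_right scaleQ_mult_left Q.span_add Q.span_scale Q.span_zero)
  have "t * y \<in> Q.span T" if "t \<in> T" for t
  proof -
    have "t' * t \<in> Q.span T" if "t' \<in> T" for t'
      using T that \<open>t \<in> T\<close> unfolding subring_def by (blast intro: Q.span_base)
    then have "y * t \<in> Q.span T" using left y by blast
    then show ?thesis by (simp add: mult.commute)
  qed
  then show ?thesis using left x by blast
qed

lemma linear_scaleQI:
  assumes "\<And>x y. f (x + y) = f x + f y" "\<And>c x. f (scaleQ c x) = scaleQ c (f x)"
  shows "Vector_Spaces.linear scaleQ scaleQ f"
  unfolding Vector_Spaces.linear_iff using Q.vector_space_axioms assms by blast

lemma linear_inj_on_span_imp_surj:
  assumes lin: "Vector_Spaces.linear scaleQ scaleQ f"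
    and maps: "f ` Q.span W \<subseteq> Q.span W" and inj: "inj_on f (Q.span W)"
  shows "Q.span W \<subseteq> f ` Q.span W"
proof -
  interpret pair: finite_dimensional_vector_space_pair_1 scaleQ Q_basis scaleQ ..
  interpret f: Vector_Spaces.linear scaleQ scaleQ f by (rule lin)
  have "Q.dim (f ` Q.span W) = Q.dim (Q.span W)"
    using pair.dim_image_eq[OF lin, of "Q.span W"] inj by (simp add: Q.span_span)
  then show ?thesis
    using Q.subspace_dim_equal[OF f.subspace_image[OF Q.subspace_span] Q.subspace_span maps] by simp
qed

lemma Q_span_inverse:
  assumes T: "subring T" and y: "y \<in> Q.span T" "y \<noteq> 0"
  obtains u where "u \<in> Q.span T" "y * u = 1"
proof -
  have lin: "Vector_Spaces.linear scaleQ scaleQ (\<lambda>v. y * v)"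
    by (rule linear_scaleQI) (simp_all add: distrib_left scaleQ_mult_right)
  have "Q.span T \<subseteq> (\<lambda>v. y * v) ` Q.span T"
  proof (rule linear_inj_on_span_imp_surj[OF lin])
    show "(\<lambda>v. y * v) ` Q.span T \<subseteq> Q.span T"
      using Q_span_mult_closed[OF T y(1)] by blast
    show "inj_on (\<lambda>v. y * v) (Q.span T)"
      by (rule inj_onI) (rule mult_left_cancel_nf[OF y(2)])
  qed
  moreover have "1 \<in> Q.span T" using T by (simp add: subring_def Q.span_base)
  ultimately obtain u where "u \<in> Q.span T" "1 = y * u" by blast
  then show ?thesis using that by simp
qed

lemma trace_form_nondegenerate:
  assumes T: "subring T" and y: "y \<in> Q.span T"
    and zero: "\<And>v. v \<in> Q.span T \<Longrightarrow> trace (y * v) = 0"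
  shows "y = 0"
proof (rule ccontr)
  assume "y \<noteq> 0"
  then obtain u where "u \<in> Q.span T" "y * u = 1" by (rule Q_span_inverse[OF T y])
  then show False using zero[of u] trace_1_neq_0 by simp
qed

lemma Q_independent_coeff_eq_0:
  "Q.independent W \<Longrightarrow> (\<Sum>v\<in>W. scaleQ (c v) v) = 0 \<Longrightarrow> v \<in> W \<Longrightarrow> c v = 0"
  unfolding Q.independent_explicit by blast

lemma trace_coordinates_surj:
  assumes T: "subring T" and W: "Q.independent W" "Q.span W = Q.span T"
  shows "Q.span T \<subseteq> (\<lambda>y. \<Sum>w\<in>W. scaleQ (trace (y * w)) w) ` Q.span T"
proof -
  define f where "f y = (\<Sum>w\<in>W. scaleQ (trace (y * w)) w)" for y
  have lin: "Vector_Spaces.linear scaleQ scaleQ f"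
    unfolding f_def by (rule linear_scaleQI) (simp_all add: distrib_right scaleQ_mult_left trace_add
        trace_scaleQ Q.scale_left_distrib sum.distrib Q.scale_sum_right)
  interpret f: Vector_Spaces.linear scaleQ scaleQ f by (rule lin)
  have "y = 0" if y: "y \<in> Q.span W" "f y = 0" for y
  proof (rule trace_form_nondegenerate[OF T])
    show "y \<in> Q.span T" using y(1) W(2) by simp
    have "trace (y * w) = 0" if "w \<in> W" for w
      using Q_independent_coeff_eq_0[OF W(1), of "\<lambda>w. trace (y * w)"] y(2) that
      unfolding f_def by simp
    then show "trace (y * v) = 0" if "v \<in> Q.span T" for v
      using trace_mult_eq_0_on_span[of W y v] that W(2) by blast
  qed
  then have inj: "inj_on f (Q.span W)"
    unfolding f.inj_on_iff_eq_0[OF Q.subspace_span] by blast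
  have "f y \<in> Q.span W" for y
    unfolding f_def by (intro Q.span_sum Q.span_scale Q.span_base)
  then have "f ` Q.span W \<subseteq> Q.span W" by blast
  then have "Q.span W \<subseteq> f ` Q.span W"
    using inj by (rule linear_inj_on_span_imp_surj[OF lin])
  then show ?thesis using W(2) unfolding f_def by simp
qed

text \<open>The dual basis of $W$ with respect to the trace form: the preimages of the $w_0 \in W$
  under the map above.\<close>

lemma trace_dual_basis:
  assumes T: "subring T" and W: "Q.independent W" "Q.span W = Q.span T"
  shows "\<exists>dual. \<forall>w0\<in>W. dual w0 \<in> Q.span T
    \<and> (\<forall>w\<in>W. trace (dual w0 * w) = (if w = w0 then 1 else 0))"
proof -
  have fin: "finite W" using Q.finiteI_independent[OF W(1)] .
  have "\<exists>y\<in>Q.span T. (\<Sum>w\<in>W. scaleQ (trace (y * w)) w) = w0" if "w0 \<in> W" for w0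
    using trace_coordinates_surj[OF T W] W(2) Q.span_base[OF that] by auto
  then obtain dual where dual: "\<And>w0. w0 \<in> W \<Longrightarrow>
      dual w0 \<in> Q.span T \<and> (\<Sum>w\<in>W. scaleQ (trace (dual w0 * w)) w) = w0"
    by metis
  have "trace (dual w0 * w) = (if w = w0 then 1 else 0)" if w0: "w0 \<in> W" and w: "w \<in> W" for w0 w
  proof -
    have "(\<Sum>w\<in>W. scaleQ (if w = w0 then 1 else 0) w) = (\<Sum>w\<in>W. if w = w0 then w else 0)"
      by (rule sum.cong) (simp_all add: Q.scale_zero_left)
    also have "\<dots> = w0" using w0 fin by simp
    finally have "(\<Sum>w\<in>W. scaleQ (trace (dual w0 * w) - (if w = w0 then 1 else 0)) w) = 0"
      using dual[OF w0] by (simp add: Q.scale_left_diff_distrib sum_subtractf)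
    then show ?thesis
      using Q_independent_coeff_eq_0[OF W(1), of "\<lambda>w. trace (dual w0 * w) - (if w = w0 then 1 else 0)"] w
      by simp
  qed
  then show ?thesis using dual by blast
qed

lemma eq_sum_trace_dual_basis:
  assumes T: "subring T" and W: "finite W" "Q.span W = Q.span T"
    and dual: "\<And>w0. w0 \<in> W \<Longrightarrow> dual w0 \<in> Q.span T"
      "\<And>w0 w. w0 \<in> W \<Longrightarrow> w \<in> W \<Longrightarrow> trace (dual w0 * w) = (if w = w0 then 1 else 0)"
    and t: "t \<in> Q.span T"
  shows "t = (\<Sum>w0\<in>W. scaleQ (trace (t * w0)) (dual w0))" (is "t = ?z")
proof -
  have "t - ?z \<in> Q.span T"
    using t dual(1) by (intro Q.span_diff Q.span_sum Q.span_scale) auto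
  moreover have "trace ((t - ?z) * w) = 0" if w: "w \<in> W" for w
  proof -
    have "trace (?z * w) = (\<Sum>w0\<in>W. trace (t * w0) * trace (dual w0 * w))"
      by (simp add: sum_distrib_right scaleQ_mult_left trace_sum)
    also have "\<dots> = (\<Sum>w0\<in>W. if w0 = w then trace (t * w0) else 0)"
      using dual(2)[OF _ w] by (intro sum.cong) auto
    also have "\<dots> = trace (t * w)" using w W(1) by simp
    finally show ?thesis by (simp add: left_diff_distrib trace_diff)
  qed
  then have "trace ((t - ?z) * v) = 0" if "v \<in> Q.span T" for v
    using trace_mult_eq_0_on_span[of W "t - ?z" v] that W(2) by simp
  ultimately have "t - ?z = 0"
    by (rule trace_form_nondegenerate[OF T])
  then show ?thesis by simp
qed

lemma subring_subset_int_span_if_trace_int: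
  assumes T: "subring T" and int: "\<And>t. t \<in> T \<Longrightarrow> trace t \<in> \<int>"
  obtains m g where "T \<subseteq> int_span m g"
proof -
  obtain W where "W \<subseteq> T" and W: "Q.independent W" "T \<subseteq> Q.span W"
    using Q.maximal_independent_subset[of T] by blast
  then have span: "Q.span W = Q.span T"
    using Q.span_mono[OF W(2)] Q.span_mono[OF \<open>W \<subseteq> T\<close>] by (simp add: Q.span_span)
  obtain dual where dual: "\<And>w0. w0 \<in> W \<Longrightarrow> dual w0 \<in> Q.span T"
    "\<And>w0 w. w0 \<in> W \<Longrightarrow> w \<in> W \<Longrightarrow> trace (dual w0 * w) = (if w = w0 then 1 else 0)"
    using trace_dual_basis[OF T W(1) span] by blast
  have fin: "finite W" using Q.finiteI_independent[OF W(1)] .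
  obtain h where h: "bij_betw h {..<card W} W"
    using ex_bij_betw_nat_finite[OF fin] by (auto simp: atLeast0LessThan)
  have "t \<in> int_span (card W) (dual \<circ> h)" if t: "t \<in> T" for t
  proof -
    have "trace (t * w0) \<in> \<int>" if "w0 \<in> W" for w0
      using int T t that \<open>W \<subseteq> T\<close> unfolding subring_def by blast
    then have "\<forall>w0\<in>W. \<exists>k. trace (t * w0) = of_int k" by (metis Ints_cases)
    from bchoice[OF this] obtain k where k: "\<forall>w0\<in>W. trace (t * w0) = of_int (k w0)" ..
    have "t = (\<Sum>w0\<in>W. scaleQ (trace (t * w0)) (dual w0))"
      using T fin span dual Q.span_base[OF t] by (rule eq_sum_trace_dual_basis)
    also have "\<dots> = (\<Sum>w0\<in>W. of_int (k w0) * dual w0)"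
      by (intro sum.cong) (simp_all add: k scaleQ_of_int)
    also have "\<dots> = (\<Sum>i<card W. of_int (k (h i)) * (dual \<circ> h) i)"
      unfolding sum.reindex_bij_betw[OF h, symmetric] by simp
    finally show ?thesis by (rule int_spanI)
  qed
  then have "T \<subseteq> int_span (card W) (dual \<circ> h)" by blast
  then show ?thesis by (rule that)
qed

end

section \<open>The blowup of a lattice in a number field\<close>

context number_field
begin

lemma Q_span_UNIV_if_contains_multiple_of_basis:
  assumes "p \<noteq> 0" "\<And>c. c \<in> Q_basis \<Longrightarrow> p * c \<in> M"
  shows "Q.span M = UNIV"
proof -
  have "x \<in> Q.span M" for x
  proof -
    have "x = p * (recip p * x)" by (simp add: mult_recip[OF assms(1)] flip: mult.assoc)
    also have "\<dots> = p * (\<Sum>c\<in>Q_basis. scaleQ (Q.representation Q_basis (recip p * x) c) c)"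
      using Q_sum_representation[OF Q.finite_Basis Q.independent_Basis Q.span_Basis] by simp
    also have "\<dots> = (\<Sum>c\<in>Q_basis. scaleQ (Q.representation Q_basis (recip p * x) c) (p * c))"
      by (simp add: sum_distrib_left scaleQ_mult_right)
    also have "\<dots> \<in> Q.span M"
      using assms(2) by (intro Q.span_sum Q.span_scale Q.span_base)
    finally show ?thesis .
  qed
  then show ?thesis by blast
qed

lemma full_lattice_basis:
  assumes "additive_subgroup M" "M \<subseteq> int_span m g" "Q.span M = UNIV"
  obtains n b where "int_independent n b" "M = int_span n b" "Q.span (b ` {..<n}) = UNIV"
proof -
  obtain n b where b: "int_independent n b" "M = int_span n b"
    using subgroup_int_span_free[OF assms(1,2)] by blast
  then have "Q.span M \<subseteq> Q.span (b ` {..<n})"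
    using Q.span_mono[OF int_span_subset_Q_span] by (simp add: Q.span_span)
  then show ?thesis using that b assms(3) by blast
qed

lemma lattice_basis_set_mult:
  assumes P: "additive_subgroup P" "P \<subseteq> int_span m g" and p: "p \<in> P" "p \<noteq> 0"
    and e: "bij_betw e {..<card Q_basis} Q_basis"
  obtains n b where "int_independent n b" "Q.span (b ` {..<n}) = UNIV"
    "set_mult P (int_span (card Q_basis) e) = int_span n b"
proof -
  let ?M = "set_mult P (int_span (card Q_basis) e)"
  have "?M \<subseteq> set_mult (int_span m g) (int_span (card Q_basis) e)"
    using P(2) by (rule set_mult_mono) simp
  also have "\<dots> \<subseteq> int_span (m * card Q_basis) (\<lambda>i. g (i div card Q_basis) * e (i mod card Q_basis))"
    by (rule set_mult_int_span)
  finally have fg: "?M \<subseteq> int_span (m * card Q_basis) (\<lambda>i. g (i div card Q_basis) * e (i mod card Q_basis))" .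
  have "Q.span ?M = UNIV"
  proof (rule Q_span_UNIV_if_contains_multiple_of_basis[OF p(2)])
    fix c assume "c \<in> Q_basis"
    then obtain i where "i < card Q_basis" "c = e i"
      using e unfolding bij_betw_def by auto
    then have "c \<in> int_span (card Q_basis) e" by (simp add: int_span_generator)
    then show "p * c \<in> ?M" by (rule mult_mem_set_mult[OF p(1)])
  qed
  with additive_subgroup_set_mult[OF P(1)] fg obtain n b
    where "int_independent n b" "?M = int_span n b" "Q.span (b ` {..<n}) = UNIV"
    by (rule full_lattice_basis)
  then show ?thesis using that by blast
qed

lemma trace_int_if_mem_colon_pow:
  assumes I: "additive_subgroup I" "fin_gen I" and a: "a \<in> I" "a \<noteq> 0"
    and t: "t \<in> colon_pow I (Suc k)"
  shows "trace t \<in> \<int>"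
proof -
  obtain e where e: "bij_betw e {..<card Q_basis} Q_basis"
    using ex_bij_betw_nat_finite[OF Q.finite_Basis] by (auto simp: atLeast0LessThan)
  obtain m g where P: "set_pow I (Suc k) \<subseteq> int_span m g"
    using set_pow_subset_int_span[OF I] by blast
  have "a ^ Suc k \<noteq> 0" using a(2) by (induction k) (simp_all add: mult_eq_0_nf)
  then obtain n b where b: "int_independent n b" "Q.span (b ` {..<n}) = UNIV"
    and M: "set_mult (set_pow I (Suc k)) (int_span (card Q_basis) e) = int_span n b"
    by (rule lattice_basis_set_mult[OF additive_subgroup_set_pow[OF I(1)] P
          power_mem_set_pow[OF I(1) a(1)] _ e])
  have "t * x \<in> int_span n b" if "x \<in> int_span n b" for x
    using that unfolding M[symmetric]
    by (rule mult_left_mem_set_mult[rotated]) (use t in \<open>simp add: colon_def\<close>)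
  then show ?thesis
    using int_span_generator[of _ n b] by (intro trace_int_if_stabilizes_lattice[OF b]) simp
qed

theorem blowup_is_order:
  fixes I :: "'a set"
  assumes I: "additive_subgroup I" "fin_gen I" "I \<noteq> {0}"
  shows "(\<exists>n. blowup I = colon_pow I n) \<and> is_order (blowup I)"
proof -
  obtain a where a: "a \<in> I" "a \<noteq> 0"
    using I(1,3) unfolding additive_subgroup_def by blast
  have "trace t \<in> \<int>" if t: "t \<in> blowup I" for t
  proof -
    obtain k where "t \<in> colon_pow I (Suc k)"
      using t colon_pow_subset_Suc unfolding blowup_def by blast
    then show ?thesis by (rule trace_int_if_mem_colon_pow[OF I(1,2) a])
  qed
  then obtain m g where "blowup I \<subseteq> int_span m g"
    by (rule subring_subset_int_span_if_trace_int[OF subring_blowup[OF I(1)]])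
  moreover have "additive_subgroup (blowup I)"
    using subring_blowup[OF I(1)] unfolding subring_def by blast
  ultimately obtain n b where b: "int_independent n b" "blowup I = int_span n b"
    using subgroup_int_span_free by blast
  obtain K where "blowup I = colon_pow I K"
    using I(1) b(2) by (rule blowup_eq_colon_pow_if_int_span)
  moreover have "is_order (blowup I)"
    unfolding is_order_def
    using subring_blowup[OF I(1)] zero_neq_one_nf mult_eq_0_nf bij_betw_int_span[OF b(1)] b(2)
    by auto
  ultimately show ?thesis by blast
qed

end

theorem proposition4p37:
  fixes I :: "'a::comm_ring_1 set"
  assumes "additive_subgroup I"
  shows "subring (blowup I)
    \<and> (\<forall>R. subring R \<and> invertible_ideal R (set_mult R I) \<longrightarrow> blowup I \<subseteq> R)
    \<and> (\<forall>n. invertible_ideal (colon (set_pow I n) (set_pow I n))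
              (set_mult (colon (set_pow I n) (set_pow I n)) I)
           \<longrightarrow> colon (set_pow I n) (set_pow I n) = blowup I)
    \<and> (number_field_type TYPE('a) \<and> fin_gen I \<and> I \<noteq> {0} \<longrightarrow>
         (\<exists>n. blowup I = colon (set_pow I n) (set_pow I n)) \<and> is_order (blowup I))"
proof (intro conjI allI impI)
  show "subring (blowup I)" using assms by (rule subring_blowup)
  show "blowup I \<subseteq> R" if "subring R \<and> invertible_ideal R (set_mult R I)" for R
    using that blowup_subset_if_invertible[OF assms] by blast
  show "colon_pow I n = blowup I" if "invertible_ideal (colon_pow I n) (set_mult (colon_pow I n) I)" for n
    using assms that by (rule colon_pow_eq_blowup_if_invertible)
  assume nf: "number_field_type TYPE('a) \<and> fin_gen I \<and> I \<noteq> {0}"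
  then interpret number_field by unfold_locales blast
  show "\<exists>n. blowup I = colon_pow I n" "is_order (blowup I)"
    using blowup_is_order[OF assms] nf by blast+
qed

end
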